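(* If $G\in SVS$, then for every clique $C$ of $G$ the branch graph $B(G/C)$ is perfect.
   Context: All graphs are finite, simple and connected; a clique is a maximal complete set. A graph is split if its vertex set partitions into a stable set $S$ and a clique $K$. For $n\geq 4$, the $n$-sun $S_n$ is the split graph with stable set $\{s_1,\dots,s_n\}$, central clique $\{v_1,\dots,v_n\}$, $N(s_i)=\{v_i,v_{i+1}\}$ for $1\le i\le n-1$ and $N(s_n)=\{v_n,v_1\}$. A split graph $G$ with partition $(S,K)$ belongs to $SVS$ if: $G$ is VPT (a vertex-intersection graph of paths in a tree); every $v\in K$ satisfies $|N(v)\cap S|\le 2$; and whenever $S_k$ with $k=4$ or $k$ odd, $k\ge5$, is an induced subgraph of $G$, some $v\in K$ is adjacent to two non-consecutive vertices of the stable set of that $S_k$. For a clique $C$ of $G$, the branch graph $B(G/C)$ has vertex set the vertices of $V(G)\setminus C$ adjacent to some vertex of $C$, two such vertices $v,w$ being adjacent iff (1) $vw\notin E(G)$; (2) some vertex of $C$ is adjacent to both; (3) there exist $v',w'\in C$ with $v'$ adjacent to $v$ but not $w$, and $w'$ adjacent to $w$ but not $v$. A graph is perfect iff it contains no induced $C_{2n+1}$ or complement of $C_{2n+1}$ with $n\ge2$. *)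

theory Defs
  imports Main
begin

definition simple_graph :: "'a set \<Rightarrow> ('a \<Rightarrow> 'a \<Rightarrow> bool) \<Rightarrow> bool" where
  "simple_graph V E \<longleftrightarrow> finite V \<and>
     (\<forall>u v. E u v \<longrightarrow> u \<in> V \<and> v \<in> V) \<and>
     (\<forall>u v. E u v \<longrightarrow> E v u) \<and> (\<forall>u. \<not> E u u)"

definition is_path :: "('a \<Rightarrow> 'a \<Rightarrow> bool) \<Rightarrow> 'a list \<Rightarrow> bool" where
  "is_path E xs \<longleftrightarrow> xs \<noteq> [] \<and> distinct xs \<and>
     (\<forall>i. Suc i < length xs \<longrightarrow> E (xs ! i) (xs ! Suc i))"

definition connected_graph :: "'a set \<Rightarrow> ('a \<Rightarrow> 'a \<Rightarrow> bool) \<Rightarrow> bool" where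
  "connected_graph V E \<longleftrightarrow> V \<noteq> {} \<and>
     (\<forall>u\<in>V. \<forall>v\<in>V. \<exists>xs. is_path E xs \<and> hd xs = u \<and> last xs = v)"

definition graph :: "'a set \<Rightarrow> ('a \<Rightarrow> 'a \<Rightarrow> bool) \<Rightarrow> bool" where
  "graph V E \<longleftrightarrow> simple_graph V E \<and> connected_graph V E"

definition acyclic_graph :: "('a \<Rightarrow> 'a \<Rightarrow> bool) \<Rightarrow> bool" where
  "acyclic_graph E \<longleftrightarrow> \<not> (\<exists>xs. is_path E xs \<and> length xs \<ge> 3 \<and> E (last xs) (hd xs))"

definition tree :: "'b set \<Rightarrow> ('b \<Rightarrow> 'b \<Rightarrow> bool) \<Rightarrow> bool" where
  "tree T ET \<longleftrightarrow> graph T ET \<and> acyclic_graph ET"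

text \<open>VPT: vertex intersection graph of a family of paths in a tree (tree vertices
  labelled by natural numbers, which is no loss of generality for finite trees).\<close>
definition VPT :: "'a set \<Rightarrow> ('a \<Rightarrow> 'a \<Rightarrow> bool) \<Rightarrow> bool" where
  "VPT V E \<longleftrightarrow> (\<exists>(T::nat set) ET (P :: 'a \<Rightarrow> nat list). tree T ET \<and>
      (\<forall>v\<in>V. is_path ET (P v)) \<and>
      (\<forall>u\<in>V. \<forall>v\<in>V. u \<noteq> v \<longrightarrow> (E u v \<longleftrightarrow> set (P u) \<inter> set (P v) \<noteq> {})))"

definition complete_set :: "'a set \<Rightarrow> ('a \<Rightarrow> 'a \<Rightarrow> bool) \<Rightarrow> 'a set \<Rightarrow> bool" where
  "complete_set V E X \<longleftrightarrow> X \<subseteq> V \<and> (\<forall>x\<in>X. \<forall>y\<in>X. x \<noteq> y \<longrightarrow> E x y)"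

definition clique :: "'a set \<Rightarrow> ('a \<Rightarrow> 'a \<Rightarrow> bool) \<Rightarrow> 'a set \<Rightarrow> bool" where
  "clique V E C \<longleftrightarrow> complete_set V E C \<and>
     (\<forall>Y. complete_set V E Y \<and> C \<subseteq> Y \<longrightarrow> Y = C)"

definition stable_set :: "'a set \<Rightarrow> ('a \<Rightarrow> 'a \<Rightarrow> bool) \<Rightarrow> 'a set \<Rightarrow> bool" where
  "stable_set V E X \<longleftrightarrow> X \<subseteq> V \<and> (\<forall>x\<in>X. \<forall>y\<in>X. \<not> E x y)"

definition split_partition :: "'a set \<Rightarrow> ('a \<Rightarrow> 'a \<Rightarrow> bool) \<Rightarrow> 'a set \<Rightarrow> 'a set \<Rightarrow> bool" where
  "split_partition V E S K \<longleftrightarrow> S \<union> K = V \<and> S \<inter> K = {} \<and>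
     stable_set V E S \<and> clique V E K"

definition induced_sun :: "'a set \<Rightarrow> ('a \<Rightarrow> 'a \<Rightarrow> bool) \<Rightarrow> nat \<Rightarrow> (nat \<Rightarrow> 'a) \<Rightarrow> (nat \<Rightarrow> 'a) \<Rightarrow> bool" where
  "induced_sun V E k s v \<longleftrightarrow> k \<ge> 4 \<and>
     s ` {..<k} \<subseteq> V \<and> v ` {..<k} \<subseteq> V \<and>
     inj_on s {..<k} \<and> inj_on v {..<k} \<and> s ` {..<k} \<inter> v ` {..<k} = {} \<and>
     (\<forall>i<k. \<forall>j<k. \<not> E (s i) (s j)) \<and>
     (\<forall>i<k. \<forall>j<k. i \<noteq> j \<longrightarrow> E (v i) (v j)) \<and>
     (\<forall>i<k. \<forall>j<k. E (s i) (v j) \<longleftrightarrow> (j = i \<or> j = Suc i mod k))"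

definition SVS :: "'a set \<Rightarrow> ('a \<Rightarrow> 'a \<Rightarrow> bool) \<Rightarrow> 'a set \<Rightarrow> 'a set \<Rightarrow> bool" where
  "SVS V E S K \<longleftrightarrow> graph V E \<and> split_partition V E S K \<and> VPT V E \<and>
     (\<forall>w\<in>K. card {x\<in>S. E w x} \<le> 2) \<and>
     (\<forall>k s v. induced_sun V E k s v \<and> (k = 4 \<or> odd k) \<longrightarrow>
        (\<exists>w\<in>K. \<exists>i<k. \<exists>j<k. i \<noteq> j \<and> j \<noteq> Suc i mod k \<and> i \<noteq> Suc j mod k \<and>
            E w (s i) \<and> E w (s j)))"

definition branch_vertices :: "'a set \<Rightarrow> ('a \<Rightarrow> 'a \<Rightarrow> bool) \<Rightarrow> 'a set \<Rightarrow> 'a set" where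
  "branch_vertices V E C = {x \<in> V - C. \<exists>c\<in>C. E x c}"

definition branch_edge :: "'a set \<Rightarrow> ('a \<Rightarrow> 'a \<Rightarrow> bool) \<Rightarrow> 'a set \<Rightarrow> 'a \<Rightarrow> 'a \<Rightarrow> bool" where
  "branch_edge V E C x y \<longleftrightarrow> x \<in> branch_vertices V E C \<and> y \<in> branch_vertices V E C \<and>
     \<not> E x y \<and> (\<exists>c\<in>C. E c x \<and> E c y) \<and>
     (\<exists>x'\<in>C. E x' x \<and> \<not> E x' y) \<and> (\<exists>y'\<in>C. E y' y \<and> \<not> E y' x)"

text \<open>Perfect graphs, via the characterization given in the paper
  (no induced odd hole C_{2n+1} and no induced odd antihole, n \<ge> 2).\<close>
definition cyc_adj :: "nat \<Rightarrow> nat \<Rightarrow> nat \<Rightarrow> bool" where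
  "cyc_adj m i j \<longleftrightarrow> j = Suc i mod m \<or> i = Suc j mod m"

definition induced_odd_hole :: "'a set \<Rightarrow> ('a \<Rightarrow> 'a \<Rightarrow> bool) \<Rightarrow> 'a list \<Rightarrow> bool" where
  "induced_odd_hole V E xs \<longleftrightarrow> length xs \<ge> 5 \<and> odd (length xs) \<and> distinct xs \<and> set xs \<subseteq> V \<and>
     (\<forall>i<length xs. \<forall>j<length xs. i \<noteq> j \<longrightarrow>
        (E (xs ! i) (xs ! j) \<longleftrightarrow> cyc_adj (length xs) i j))"

definition induced_odd_antihole :: "'a set \<Rightarrow> ('a \<Rightarrow> 'a \<Rightarrow> bool) \<Rightarrow> 'a list \<Rightarrow> bool" where
  "induced_odd_antihole V E xs \<longleftrightarrow> length xs \<ge> 5 \<and> odd (length xs) \<and> distinct xs \<and> set xs \<subseteq> V \<and>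
     (\<forall>i<length xs. \<forall>j<length xs. i \<noteq> j \<longrightarrow>
        (E (xs ! i) (xs ! j) \<longleftrightarrow> \<not> cyc_adj (length xs) i j))"

definition perfect :: "'a set \<Rightarrow> ('a \<Rightarrow> 'a \<Rightarrow> bool) \<Rightarrow> bool" where
  "perfect V E \<longleftrightarrow> (\<nexists>xs. induced_odd_hole V E xs) \<and> (\<nexists>xs. induced_odd_antihole V E xs)"

end

theory Submission
  imports Defs
begin

(* If C meets S, then B(G/C) has no edges at all: a vertex of C adjacent to
   two branch vertices in S would, together with its neighbour in C \<inter> S,
   have three neighbours in S, and branch vertices in K are never
   B-adjacent to anything (see no_branch_edge_if_clique_meets_S).
   If C avoids S, then C = K and all branch vertices lie in S.  An induced
   cycle y 0, ..., y (k-1) of B(G/K) with k = 4 or k odd then yields an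
   induced k-sun of G: the common K-neighbour of y i and y (i+1) has no other
   neighbour in S.  The SVS condition provides w \<in> K adjacent to two
   non-consecutive y i, y j, and the sun vertices show that y i, y j are then
   B-adjacent (sun_chord_branch_edge), a contradiction.
   Finally, a graph with no induced C4 and no induced odd cycle of length at
   least 5 is perfect in the sense used here: odd holes are such cycles, the
   antihole on 5 vertices is itself a C5, and larger odd antiholes contain a C4. *)

section \<open>Induced cycles and perfection\<close>

definition induced_cycle :: "('a \<Rightarrow> 'a \<Rightarrow> bool) \<Rightarrow> nat \<Rightarrow> (nat \<Rightarrow> 'a) \<Rightarrow> bool" where
  "induced_cycle B k y \<longleftrightarrow> inj_on y {..<k} \<and>
     (\<forall>i<k. \<forall>j<k. i \<noteq> j \<longrightarrow> (B (y i) (y j) \<longleftrightarrow> cyc_adj k i j))"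

lemma Suc_mod_neq:
  fixes i k :: nat
  assumes "i < k" "2 \<le> k"
  shows "Suc i mod k \<noteq> i"
  using assms by (auto simp: mod_if)

lemma Suc_mod_eq_iff:
  fixes i j k :: nat
  assumes "i < k" "j < k"
  shows "Suc i mod k = Suc j mod k \<longleftrightarrow> i = j"
  using assms by (auto simp: mod_if split: if_splits)

lemma Suc_Suc_mod_neq:
  fixes a k :: nat
  assumes "a < k" "3 \<le> k"
  shows "Suc (Suc a mod k) mod k \<noteq> a"
  using assms by (auto simp: mod_if)

lemma pred_mod_eq_iff:
  fixes i j k :: nat
  assumes "i < k" "j < k"
  shows "(j + k - 1) mod k = i \<longleftrightarrow> j = Suc i mod k"
  using assms by (cases "Suc i = k"; cases j) (auto simp: mod_if)

lemma induced_cycle_edge: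
  assumes "induced_cycle B k y" "2 \<le> k" "i < k"
  shows "B (y i) (y (Suc i mod k))"
  using assms Suc_mod_neq[of i k] unfolding induced_cycle_def cyc_adj_def by auto

lemma odd_hole_induced_cycle:
  assumes "induced_odd_hole W B xs"
  shows "induced_cycle B (length xs) ((!) xs)" "(!) xs ` {..<length xs} \<subseteq> W"
  using assms unfolding induced_odd_hole_def induced_cycle_def
  by (auto simp: inj_on_nth)

lemma antihole_induced_cycle:
  assumes hole: "induced_odd_antihole W B xs"
    and p: "distinct p" "set p \<subseteq> {..<length xs}"
    and pattern: "\<And>i j. i < length p \<Longrightarrow> j < length p \<Longrightarrow> i \<noteq> j \<Longrightarrow>
       cyc_adj (length xs) (p ! i) (p ! j) \<longleftrightarrow> \<not> cyc_adj (length p) i j"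
  shows "induced_cycle B (length p) (\<lambda>i. xs ! (p ! i))"
    and "(\<lambda>i. xs ! (p ! i)) ` {..<length p} \<subseteq> W"
proof -
  have xs: "distinct xs" "set xs \<subseteq> W"
    and adj: "\<And>a b. a < length xs \<Longrightarrow> b < length xs \<Longrightarrow> a \<noteq> b \<Longrightarrow>
       B (xs ! a) (xs ! b) \<longleftrightarrow> \<not> cyc_adj (length xs) a b"
    using hole unfolding induced_odd_antihole_def by auto
  have p_lt: "p ! i < length xs" if "i < length p" for i
    using p that nth_mem by blast
  have "inj_on (\<lambda>i. xs ! (p ! i)) {..<length p}"
    using xs(1) p(1) p_lt by (auto simp: inj_on_def nth_eq_iff_index_eq)
  moreover have "B (xs ! (p ! i)) (xs ! (p ! j)) \<longleftrightarrow> cyc_adj (length p) i j"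
    if "i < length p" "j < length p" "i \<noteq> j" for i j
    using adj[OF p_lt p_lt] pattern that p(1) by (simp add: nth_eq_iff_index_eq)
  ultimately show "induced_cycle B (length p) (\<lambda>i. xs ! (p ! i))"
    unfolding induced_cycle_def by blast
  show "(\<lambda>i. xs ! (p ! i)) ` {..<length p} \<subseteq> W"
    using xs(2) p_lt by auto
qed

lemma odd_antihole_short_cycle:
  assumes hole: "induced_odd_antihole W B xs"
  obtains k y where "k = 4 \<or> k = 5" "induced_cycle B k y" "y ` {..<k} \<subseteq> W"
proof -
  have "5 \<le> length xs" "odd (length xs)"
    using hole unfolding induced_odd_antihole_def by auto
  then have m: "length xs = 5 \<or> 7 \<le> length xs"
    by presburger
  obtain p :: "nat list" where p: "length p = 4 \<or> length p = 5" "distinct p"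
    "set p \<subseteq> {..<length xs}"
    and pattern: "\<forall>i \<in> set [0..<length p]. \<forall>j \<in> set [0..<length p]. i \<noteq> j \<longrightarrow>
      (cyc_adj (length xs) (p ! i) (p ! j) \<longleftrightarrow> \<not> cyc_adj (length p) i j)"
  proof (cases "length xs = 5")
    case True
    let ?p = "[0, 2, 4, 1, 3] :: nat list"
    have pattern: "\<forall>i \<in> set [0..<length ?p]. \<forall>j \<in> set [0..<length ?p]. i \<noteq> j \<longrightarrow>
        (cyc_adj (length xs) (?p ! i) (?p ! j) \<longleftrightarrow> \<not> cyc_adj (length ?p) i j)"
      unfolding True cyc_adj_def by (simp add: upt_rec)
    show thesis
      by (rule that[of ?p, OF _ _ _ pattern]) (simp_all add: True)
  next
    case False
    then have m7: "7 \<le> length xs"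
      using m by blast
    let ?p = "[0, 3, 1, 4] :: nat list"
    have pattern: "\<forall>i \<in> set [0..<length ?p]. \<forall>j \<in> set [0..<length ?p]. i \<noteq> j \<longrightarrow>
        (cyc_adj (length xs) (?p ! i) (?p ! j) \<longleftrightarrow> \<not> cyc_adj (length ?p) i j)"
      using m7 unfolding cyc_adj_def by (simp add: upt_rec)
    show thesis
      by (rule that[of ?p, OF _ _ _ pattern]) (use m7 in auto)
  qed
  have "induced_cycle B (length p) (\<lambda>i. xs ! (p ! i))"
    and "(\<lambda>i. xs ! (p ! i)) ` {..<length p} \<subseteq> W"
    using antihole_induced_cycle[OF hole p(2,3)] pattern by auto
  then show thesis
    using that p(1) by blast
qed

lemma perfect_if_no_short_induced_cycles:
  assumes no_cycle: "\<And>k y. 4 \<le> k \<Longrightarrow> k = 4 \<or> odd k \<Longrightarrow> y ` {..<k} \<subseteq> W \<Longrightarrow>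
     \<not> induced_cycle B k y"
  shows "perfect W B"
  unfolding perfect_def
proof (intro conjI notI)
  assume "\<exists>xs. induced_odd_hole W B xs"
  then obtain xs where hole: "induced_odd_hole W B xs" by blast
  then have "5 \<le> length xs" "odd (length xs)"
    unfolding induced_odd_hole_def by auto
  then show False
    using no_cycle odd_hole_induced_cycle[OF hole] by fastforce
next
  assume "\<exists>xs. induced_odd_antihole W B xs"
  then obtain xs where "induced_odd_antihole W B xs" by blast
  then show False
    by (rule odd_antihole_short_cycle) (use no_cycle in fastforce)
qed

lemma edgeless_perfect:
  assumes "\<And>x y. \<not> B x y"
  shows "perfect W B"
  using assms induced_cycle_edge[of B _ _ 0]
  by (intro perfect_if_no_short_induced_cycles) fastforce

section \<open>Suns and branch graphs\<close>

text \<open>If some w \<in> C is adjacent to two non-consecutive stable vertices s i, s j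
  of a sun whose clique part lies in C, then s i and s j are adjacent in B(G/C):
  the sun vertex after s i separates s i from s j and vice versa.\<close>
lemma sun_chord_branch_edge:
  assumes graph: "simple_graph V E" and sun: "induced_sun V E k s v"
    and vC: "v ` {..<k} \<subseteq> C" and w: "w \<in> C" "E w (s i)" "E w (s j)"
    and notC: "s i \<notin> C" "s j \<notin> C"
    and ij: "i < k" "j < k" "i \<noteq> j" "\<not> cyc_adj k i j"
  shows "branch_edge V E C (s i) (s j)"
proof -
  have sym: "E a b \<longleftrightarrow> E b a" for a b
    using graph unfolding simple_graph_def by blast
  have s_stable: "\<not> E (s i) (s j)"
    and s_v: "\<And>a b. a < k \<Longrightarrow> b < k \<Longrightarrow> E (s a) (v b) \<longleftrightarrow> b = a \<or> b = Suc a mod k"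
    using sun ij unfolding induced_sun_def by auto
  have branch: "s a \<in> branch_vertices V E C" if "a < k" "s a \<notin> C" for a
  proof -
    have "s a \<in> V" "v a \<in> C"
      using sun vC that(1) unfolding induced_sun_def by auto
    moreover have "E (s a) (v a)"
      using s_v[of a a] that(1) by simp
    ultimately show ?thesis
      using that(2) unfolding branch_vertices_def by blast
  qed
  have separates: "\<exists>x\<in>C. E x (s a) \<and> \<not> E x (s b)"
    if "a < k" "b < k" "a \<noteq> b" "b \<noteq> Suc a mod k" for a b
  proof
    have "Suc a mod k \<noteq> Suc b mod k"
      using Suc_mod_eq_iff[of a k b] that by blast
    then show "E (v (Suc a mod k)) (s a) \<and> \<not> E (v (Suc a mod k)) (s b)"
      using s_v[of a "Suc a mod k"] s_v[of b "Suc a mod k"] that sym by simp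
    have "Suc a mod k < k"
      using that(1) by simp
    then show "v (Suc a mod k) \<in> C"
      using vC by blast
  qed
  show ?thesis
    unfolding branch_edge_def
  proof (intro conjI)
    show "s i \<in> branch_vertices V E C" "s j \<in> branch_vertices V E C"
      using branch notC ij by auto
    show "\<not> E (s i) (s j)" by (fact s_stable)
    show "\<exists>c\<in>C. E c (s i) \<and> E c (s j)"
      using w by blast
    show "\<exists>x'\<in>C. E x' (s i) \<and> \<not> E x' (s j)" "\<exists>y'\<in>C. E y' (s j) \<and> \<not> E y' (s i)"
      using separates[of i j] separates[of j i] ij unfolding cyc_adj_def by auto
  qed
qed

locale svs_graph =
  fixes V :: "'a set" and E :: "'a \<Rightarrow> 'a \<Rightarrow> bool" and S K :: "'a set"
  assumes svs: "SVS V E S K"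
begin

lemma simple: "simple_graph V E"
  using svs unfolding SVS_def graph_def by blast

lemma sym: "E u v \<Longrightarrow> E v u"
  using simple unfolding simple_graph_def by blast

lemma partition: "S \<union> K = V" "S \<inter> K = {}"
  using svs unfolding SVS_def split_partition_def by auto

lemma S_stable: "x \<in> S \<Longrightarrow> y \<in> S \<Longrightarrow> \<not> E x y"
  using svs unfolding SVS_def split_partition_def stable_set_def by blast

lemma K_clique: "clique V E K"
  using svs unfolding SVS_def split_partition_def by blast

lemma K_complete: "x \<in> K \<Longrightarrow> y \<in> K \<Longrightarrow> x \<noteq> y \<Longrightarrow> E x y"
  using K_clique unfolding clique_def complete_set_def by blast

lemma S_neighbours_of_K:
  assumes "w \<in> K" "a \<in> S" "b \<in> S" "a \<noteq> b" "E w a" "E w b" "x \<in> S" "E w x"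
  shows "x = a \<or> x = b"
proof (rule ccontr)
  assume x: "\<not> (x = a \<or> x = b)"
  have "finite S"
    using simple partition(1) unfolding simple_graph_def by auto
  then have "card {a, b, x} \<le> card {z \<in> S. E w z}"
    using assms by (intro card_mono) auto
  moreover have "card {z \<in> S. E w z} \<le> 2"
    using svs assms(1) unfolding SVS_def by blast
  ultimately show False
    using x assms(4) by auto
qed

lemma no_branch_edge_if_clique_meets_S:
  assumes C: "clique V E C" and s: "s \<in> C" "s \<in> S"
  shows "\<not> branch_edge V E C x y"
proof
  assume "branch_edge V E C x y"
  then obtain c x' y' where c: "c \<in> C" "E c x" "E c y"
    and xy: "x \<in> V - C" "y \<in> V - C" "\<not> E x y"
    and x': "x' \<in> C" "E x' x" "\<not> E x' y" and y': "y' \<in> C" "E y' y" "\<not> E y' x"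
    unfolding branch_edge_def branch_vertices_def by blast
  have C_complete: "\<And>a b. a \<in> C \<Longrightarrow> b \<in> C \<Longrightarrow> a \<noteq> b \<Longrightarrow> E a b"
    and CV: "C \<subseteq> V"
    using C unfolding clique_def complete_set_def by auto
  have in_K: "z \<in> K" if "z \<in> C" "u \<in> S" "E z u" for z u
    using that CV partition(1) S_stable by blast
  consider "x \<in> S" "y \<in> S" | "x \<in> K" | "y \<in> K"
    using xy partition(1) by blast
  then show False
  proof cases
    case 1
    then have "c \<in> K" "c \<noteq> s"
      using in_K c S_stable s by auto
    then have "s = x \<or> s = y"
      using S_neighbours_of_K[of c x y s] 1 c s C_complete x' by auto
    then show False
      using s xy by auto
  next
    case 2
    then show False
      using in_K[of y' y] K_complete[of x y] K_complete[of y' x] y' xy partition(1) by blast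
  next
    case 3
    then show False
      using in_K[of x' x] K_complete[of x y] K_complete[of x' y] x' xy partition(1) by blast
  qed
qed

lemma clique_avoiding_S:
  assumes C: "clique V E C" and "C \<inter> S = {}"
  shows "C = K"
proof -
  have "C \<subseteq> K"
    using assms partition(1) unfolding clique_def complete_set_def by blast
  then show ?thesis
    using C K_clique unfolding clique_def by blast
qed

lemma branch_vertices_K: "branch_vertices V E K \<subseteq> S"
  using partition(1) unfolding branch_vertices_def by auto

lemma branch_cycle_sun:
  assumes cycle: "induced_cycle (branch_edge V E K) k y"
    and k: "4 \<le> k" and yS: "y ` {..<k} \<subseteq> S"
  obtains v where "induced_sun V E k y v" "v ` {..<k} \<subseteq> K"
proof -
  have y_eq: "y a = y b \<longleftrightarrow> a = b" if "a < k" "b < k" for a b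
    using cycle that unfolding induced_cycle_def inj_on_def by blast
  have y_in_S: "y a \<in> S" if "a < k" for a
    using yS that by auto
  have "\<exists>c. c \<in> K \<and> E c (y i) \<and> E c (y (Suc i mod k))" if "i < k" for i
    using induced_cycle_edge[OF cycle _ that] k unfolding branch_edge_def by auto
  then obtain c where c: "\<And>i. i < k \<Longrightarrow> c i \<in> K \<and> E (c i) (y i) \<and> E (c i) (y (Suc i mod k))"
    by metis
  have c_adj: "E (c i) (y a) \<longleftrightarrow> a = i \<or> a = Suc i mod k" if "i < k" "a < k" for i a
  proof
    assume "E (c i) (y a)"
    then show "a = i \<or> a = Suc i mod k"
      using S_neighbours_of_K[of "c i" "y i" "y (Suc i mod k)" "y a"] c[OF that(1)]
        y_in_S y_eq Suc_mod_neq[of i k] that k by auto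
  qed (use c that in auto)
  define v where "v j = c ((j + k - 1) mod k)" for j
  have v_adj: "E (y i) (v j) \<longleftrightarrow> j = i \<or> j = Suc i mod k" if "i < k" "j < k" for i j
  proof -
    let ?p = "(j + k - 1) mod k"
    have p: "?p < k" "Suc ?p mod k = j"
      using that k pred_mod_eq_iff[of ?p k j] by auto
    have "E (y i) (v j) \<longleftrightarrow> i = ?p \<or> i = j"
      using c_adj[of ?p i] p that sym unfolding v_def by auto
    also have "\<dots> \<longleftrightarrow> j = i \<or> j = Suc i mod k"
      using pred_mod_eq_iff[of i k j] that by auto
    finally show ?thesis .
  qed
  have v_inj: "inj_on v {..<k}"
  proof (rule inj_onI)
    fix a b assume ab: "a \<in> {..<k}" "b \<in> {..<k}" "v a = v b"
    then have "b = a \<or> b = Suc a mod k" "a = b \<or> a = Suc b mod k"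
      using v_adj[of a a] v_adj[of a b] v_adj[of b b] v_adj[of b a] by auto
    then show "a = b"
      using Suc_Suc_mod_neq[of a k] ab k by auto
  qed
  have v_in_K: "v ` {..<k} \<subseteq> K"
    using c unfolding v_def by auto
  have "induced_sun V E k y v"
    unfolding induced_sun_def
  proof (intro conjI)
    show "y ` {..<k} \<subseteq> V" "v ` {..<k} \<subseteq> V"
      using yS v_in_K partition(1) by auto
    show "inj_on y {..<k}"
      using cycle unfolding induced_cycle_def by blast
    show "y ` {..<k} \<inter> v ` {..<k} = {}"
      using yS v_in_K partition(2) by blast
    show "\<forall>i<k. \<forall>j<k. \<not> E (y i) (y j)"
      using y_in_S S_stable by blast
    show "\<forall>i<k. \<forall>j<k. i \<noteq> j \<longrightarrow> E (v i) (v j)"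
      using v_in_K v_inj K_complete unfolding inj_on_def by blast
    show "\<forall>i<k. \<forall>j<k. E (y i) (v j) \<longleftrightarrow> j = i \<or> j = Suc i mod k"
      using v_adj by blast
  qed (use k v_inj in auto)
  then show thesis
    using that v_in_K by blast
qed

lemma sun_chord_vertex:
  assumes "induced_sun V E k s v" "k = 4 \<or> odd k"
  obtains w i j where "w \<in> K" "i < k" "j < k" "i \<noteq> j" "\<not> cyc_adj k i j"
    "E w (s i)" "E w (s j)"
proof -
  have "\<forall>k s v. induced_sun V E k s v \<and> (k = 4 \<or> odd k) \<longrightarrow>
      (\<exists>w\<in>K. \<exists>i<k. \<exists>j<k. i \<noteq> j \<and> j \<noteq> Suc i mod k \<and> i \<noteq> Suc j mod k \<and>
          E w (s i) \<and> E w (s j))"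
    using svs unfolding SVS_def by (elim conjE) assumption
  then obtain w i j where "w \<in> K" "i < k" "j < k" "i \<noteq> j" "j \<noteq> Suc i mod k"
    "i \<noteq> Suc j mod k" "E w (s i)" "E w (s j)"
    using assms by blast
  then show thesis
    using that unfolding cyc_adj_def by blast
qed

text \<open>B(G/K) has no induced C4 and no induced odd cycle on vertices of S: the
  sun it would induce has, by the SVS condition, a chord vertex in K, which
  makes two non-consecutive cycle vertices adjacent in B(G/K).\<close>
lemma no_short_branch_cycle:
  assumes cycle: "induced_cycle (branch_edge V E K) k y"
    and k: "4 \<le> k" "k = 4 \<or> odd k" and yS: "y ` {..<k} \<subseteq> S"
  shows False
proof -
  obtain v where sun: "induced_sun V E k y v" and vK: "v ` {..<k} \<subseteq> K"
    using branch_cycle_sun[OF cycle k(1) yS] .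
  obtain w i j where w: "w \<in> K" "E w (y i)" "E w (y j)"
    and ij: "i < k" "j < k" "i \<noteq> j" "\<not> cyc_adj k i j"
    using sun_chord_vertex[OF sun k(2)] .
  have "y i \<notin> K" "y j \<notin> K"
    using yS ij partition(2) by auto
  then have "branch_edge V E K (y i) (y j)"
    using sun_chord_branch_edge[OF simple sun vK w(1-3)] ij by blast
  then show False
    using cycle ij unfolding induced_cycle_def by blast
qed

lemma branch_graph_K_perfect: "perfect (branch_vertices V E K) (branch_edge V E K)"
proof (rule perfect_if_no_short_induced_cycles)
  fix k :: nat and y :: "nat \<Rightarrow> 'a"
  assume "4 \<le> k" "k = 4 \<or> odd k" "y ` {..<k} \<subseteq> branch_vertices V E K"
  then show "\<not> induced_cycle (branch_edge V E K) k y"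
    using no_short_branch_cycle branch_vertices_K by blast
qed

end

theorem mainTheorem13:
  fixes V :: "'a set" and E :: "'a \<Rightarrow> 'a \<Rightarrow> bool" and S K C :: "'a set"
  assumes "SVS V E S K"
    and "clique V E C"
  shows "perfect (branch_vertices V E C) (branch_edge V E C)"
proof -
  interpret svs_graph V E S K
    using assms(1) by (rule svs_graph.intro)
  show ?thesis
  proof (cases "C \<inter> S = {}")
    case True
    then show ?thesis
      using clique_avoiding_S[OF assms(2)] branch_graph_K_perfect by simp
  next
    case False
    then obtain s where "s \<in> C" "s \<in> S"
      by blast
    then show ?thesis
      using no_branch_edge_if_clique_meets_S[OF assms(2)] by (intro edgeless_perfect)
  qed
qed

end
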